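(* Under the setting and assumptions (M), (A1)–(A4) described in the context, fix a query feature $s\in S$ and a query datacube $h_q\in\mathcal H$. Suppose $\liminf_{NT\to\infty} E[\hat f(s,h_q)]>0$. Then the kernel estimator is consistent: $\hat g(s,h_q)\to g(s,h_q)$ in probability as $NT\to\infty$.
   Context: Setting. For each $N$ (number of nodes) and $T$ (number of timesteps) one observes random directed graphs $G_1,\dots,G_T$ on the vertex set $\{1,\dots,N\}$; $p\ge 1$ is a fixed lag, constant with respect to $N,T$. The local neighborhood $N_t(i)$ of node $i$ in $G_t$ is the set of nodes within 2 hops of $i$ together with all edges among them. Each node pair $(i,j)$ at time $t$ carries a pair-feature $g_t(i,j)$ taking values in a fixed finite set $S$. For $s\in S$, let $n_{i,t}(s)$ be the number of node pairs in $N_t(i)$ with pair-feature $s$ at time $t$, and $n^+_{i,t}(s)$ the number of those pairs that are joined by an edge at time $t+1$. The datacube of $i$ at time $t$ is $h_{i,t}=\{(n_{i,t-1}(s),n^+_{i,t-1}(s)):s\in S\}$; it summarizes the evolution of the neighborhood of $i$ from $t-1$ to $t$. Model (M): there is an unknown function $g:S\times\mathcal H\to[0,1]$ such that for all $i,t,s$: $E[n^+_{i,t+1}(s)\mid h_{i,t},\,n_{i,t+1}(s)] = n_{i,t+1}(s)\,g(s,h_{i,t})$. (This follows from the model that each edge indicator $Y_{t+1}(i,j)$ is, given the graph history, Bernoulli with parameter $g(g_t(i,j),h_{i,t})$.) Kernel: $K_b(h,h')=b^{D(h,h')}$ with bandwidth $0<b<1$, where $D\ge 0$ is the distance $D(h,h')=\sum_{s\in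 S}\mathrm{TV}\big(\mathcal N(\hat p_s,\hat p_s(1-\hat p_s)/n(s)),\mathcal N(\hat p'_s,\hat p'_s(1-\hat p'_s)/n'(s))\big)$, $\hat p_s=n^+(s)/n(s)$, TV the total variation distance; it is assumed that $D(h,h')=0$ iff $h=h'$, so that $\lim_{b\to 0}K_b(h,h')=1$ if $h=h'$ and $0$ otherwise. Estimator for query feature $s$ and query datacube $h_q$: $\hat h(s,h_q)=\frac{1}{N(T-p-2)}\sum_{t=p}^{T-2}\sum_{i=1}^N K_b(h_{i,t},h_q)\,n^+_{i,t+1}(s)$, $\hat f(s,h_q)=\frac{1}{N(T-p-2)}\sum_{t=p}^{T-2}\sum_{i=1}^N K_b(h_{i,t},h_q)\,n_{i,t+1}(s)$, and $\hat g(s,h_q)=\hat h(s,h_q)/\hat f(s,h_q)$ (defined when $\hat f>0$). (A1) Finite dimensionality: there is a constant $M$ independent of $N,T$ bounding all neighborhood sizes; hence all datacubes $h_{i,t}$ and counts $n_{i,t}(s),n^+_{i,t}(s)$ take values in a fixed finite set ($\mathcal H$ denotes the finite set of possible datacubes), independent of $N,T$. (A2) Bandwidth convergence: $b=b_{N,T}\to 0$ as $NT\to\infty$. Stacked graph and distance: form the graph obtained by stacking $G_1,\dots,G_T$ and joining each node $i$ at time $t$ to node $i$ at times $t-1$ and $t+1$. For index pairs $(i,t),(i',t')$, let $\mathrm{dist}((i,t),(i',t'))$ be the length of the shortest path in the stacked graph between any node of the datacube of $(i,t)$ and any node of the datacube of $(i',t')$ (it is $0$ when they share nodes). (A3) Strong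 mixing: with $\mathcal F(i,t)$ the sigma-algebra generated by the random variables in the datacube of $(i,t)$ (including the associated counts $n_{i,t+1},n^+_{i,t+1}$), let $\alpha(k)=\sup\{|P(A\cap B)-P(A)P(B)|: A\in\mathcal F(i,t),B\in\mathcal F(i',t'),\ \mathrm{dist}((i,t),(i',t'))\ge k\}$, with $\alpha$ not depending on $N,T$; assume $\sum_{k=1}^\infty \alpha(k)k^{\rho-1}<\infty$, where $\rho$ is the intrinsic dimensionality of the graphs, a constant independent of $N,T$. (A4) Growth (a consequence of bounded intrinsic dimensionality $\rho$, 2-hop neighborhoods and constant lag $p$): there is a constant $C$ independent of $N,T$ such that for every $(i,t)$ the number of index pairs $(i',t')$ with $\mathrm{dist}((i,t),(i',t'))=0$ is at most $C$, and the number with $\mathrm{dist}((i,t),(i',t'))=d$ is at most $C d^{\rho-1}$ for every $d\ge 1$. *)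

theory Defs
  imports "HOL-Probability.Probability"
begin

text \<open>Datacubes are functions from the finite feature set (a finite type 's) to pairs
 (n(s), n+(s)).  For fixed (N,T), cnt i t s w is n_{i,t}(s) and cntp i t s w is n+_{i,t}(s).\<close>

type_synonym 's datacube = "'s \<Rightarrow> nat \<times> nat"

definition datacube ::
  "(nat \<Rightarrow> nat \<Rightarrow> 's \<Rightarrow> 'a \<Rightarrow> nat) \<Rightarrow> (nat \<Rightarrow> nat \<Rightarrow> 's \<Rightarrow> 'a \<Rightarrow> nat)
   \<Rightarrow> nat \<Rightarrow> nat \<Rightarrow> 'a \<Rightarrow> 's datacube" where
  "datacube cnt cntp i t w = (\<lambda>s. (cnt i (t - 1) s w, cntp i (t - 1) s w))"

definition kernel :: "('s datacube \<Rightarrow> 's datacube \<Rightarrow> real) \<Rightarrow> real \<Rightarrow> 's datacube \<Rightarrow> 's datacube \<Rightarrow> real" where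
  "kernel D b h h' = b powr D h h'"

definition h_hat ::
  "('s datacube \<Rightarrow> 's datacube \<Rightarrow> real) \<Rightarrow> real \<Rightarrow> nat \<Rightarrow> nat \<Rightarrow> nat
   \<Rightarrow> (nat \<Rightarrow> nat \<Rightarrow> 's \<Rightarrow> 'a \<Rightarrow> nat) \<Rightarrow> (nat \<Rightarrow> nat \<Rightarrow> 's \<Rightarrow> 'a \<Rightarrow> nat)
   \<Rightarrow> 's \<Rightarrow> 's datacube \<Rightarrow> 'a \<Rightarrow> real" where
  "h_hat D b p N T cnt cntp s hq w =
     (1 / (real N * (real T - real p - 2))) *
     (\<Sum>t\<in>{p..T-2}. \<Sum>i\<in>{1..N}. kernel D b (datacube cnt cntp i t w) hq * real (cntp i (t + 1) s w))"

definition f_hat ::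
  "('s datacube \<Rightarrow> 's datacube \<Rightarrow> real) \<Rightarrow> real \<Rightarrow> nat \<Rightarrow> nat \<Rightarrow> nat
   \<Rightarrow> (nat \<Rightarrow> nat \<Rightarrow> 's \<Rightarrow> 'a \<Rightarrow> nat) \<Rightarrow> (nat \<Rightarrow> nat \<Rightarrow> 's \<Rightarrow> 'a \<Rightarrow> nat)
   \<Rightarrow> 's \<Rightarrow> 's datacube \<Rightarrow> 'a \<Rightarrow> real" where
  "f_hat D b p N T cnt cntp s hq w =
     (1 / (real N * (real T - real p - 2))) *
     (\<Sum>t\<in>{p..T-2}. \<Sum>i\<in>{1..N}. kernel D b (datacube cnt cntp i t w) hq * real (cnt i (t + 1) s w))"

text \<open>g_hat = h_hat / f_hat (Isabelle's x / 0 = 0 convention on the event f_hat = 0).\<close>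
definition g_hat ::
  "('s datacube \<Rightarrow> 's datacube \<Rightarrow> real) \<Rightarrow> real \<Rightarrow> nat \<Rightarrow> nat \<Rightarrow> nat
   \<Rightarrow> (nat \<Rightarrow> nat \<Rightarrow> 's \<Rightarrow> 'a \<Rightarrow> nat) \<Rightarrow> (nat \<Rightarrow> nat \<Rightarrow> 's \<Rightarrow> 'a \<Rightarrow> nat)
   \<Rightarrow> 's \<Rightarrow> 's datacube \<Rightarrow> 'a \<Rightarrow> real" where
  "g_hat D b p N T cnt cntp s hq w =
     h_hat D b p N T cnt cntp s hq w / f_hat D b p N T cnt cntp s hq w"

definition idx :: "nat \<Rightarrow> nat \<Rightarrow> nat \<Rightarrow> (nat \<times> nat) set" where
  "idx p N T = {1..N} \<times> {p..T-2}"

text \<open>The limit NT \<rightarrow> \<infinity>, over those (N,T) for which the estimator is defined (T - p - 2 > 0).\<close>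
definition NT_limit :: "nat \<Rightarrow> (nat \<times> nat) filter" where
  "NT_limit p = inf (filtercomap (\<lambda>(N, T). N * T) at_top) (principal {(N, T). p + 2 < T})"

definition conv_in_prob :: "'i filter \<Rightarrow> ('i \<Rightarrow> 'a measure) \<Rightarrow> ('i \<Rightarrow> 'a \<Rightarrow> real) \<Rightarrow> real \<Rightarrow> bool" where
  "conv_in_prob F M X c \<longleftrightarrow>
     (\<forall>e>0. ((\<lambda>x. measure (M x) {w \<in> space (M x). \<bar>X x w - c\<bar> > e}) \<longlongrightarrow> 0) F)"

end

theory Submission
  imports Defs
begin

text \<open>
  With \<open>m = N (T - p - 2)\<close>, both \<open>f_hat\<close> and the residual \<open>h_hat - g(s,hq) f_hat\<close> are
  \<open>1/m\<close>-normalised sums of bounded functions of the finitely-valued observations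
  \<open>(h_{i,t}, n_{i,t+1}(s), n+_{i,t+1}(s))\<close>.  Three facts combine:
  (1) Variance: strong mixing (A3) with polynomial growth (A4) bounds the row sums of the
      pairwise dependence coefficients uniformly, so by Chebyshev a centred average deviates
      by \<open>c\<close> with probability \<open>O(1 / (c^2 m))\<close>.
  (2) Bias: by the model (M) each residual summand has mean at most \<open>Mc b^delta\<close>, where
      \<open>delta > 0\<close> is the least distance from \<open>hq\<close> to another possible datacube; by (A2) it
      vanishes.
  (3) Ratio: if \<open>f_hat\<close> stays near its mean \<open>\<ge> 2c\<close> and the residual is small, \<open>g_hat\<close> is near
      \<open>g(s,hq)\<close>.
\<close>

definition finite_rv :: "'a measure \<Rightarrow> 'z set \<Rightarrow> ('a \<Rightarrow> 'z) \<Rightarrow> bool" where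
  "finite_rv M W Z \<longleftrightarrow>
     finite W \<and> (\<forall>w\<in>space M. Z w \<in> W) \<and> (\<forall>z. {w\<in>space M. Z w = z} \<in> sets M)"

lemma finite_rv_sum_indicator:
  fixes \<phi> :: "'z \<Rightarrow> real"
  assumes "finite W" "w \<in> S" "Z w \<in> W"
  shows "\<phi> (Z w) = (\<Sum>z\<in>W. \<phi> z * indicator {w'\<in>S. Z w' = z} w)"
proof -
  have "(\<Sum>z\<in>W. \<phi> z * indicator {w'\<in>S. Z w' = z} w) = (\<Sum>z\<in>W. if z = Z w then \<phi> z else 0)"
    using assms by (intro sum.cong) (auto simp: indicator_def)
  also have "\<dots> = \<phi> (Z w)"
    using assms by simp
  finally show ?thesis by simp
qed

lemma finite_rv_measurable:
  fixes \<phi> :: "'z \<Rightarrow> real"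
  assumes "finite_rv M W Z"
  shows "(\<lambda>w. \<phi> (Z w)) \<in> borel_measurable M"
proof -
  have "(\<lambda>w. \<Sum>z\<in>W. \<phi> z * indicator {w'\<in>space M. Z w' = z} w) \<in> borel_measurable M"
    using assms unfolding finite_rv_def
    by (intro borel_measurable_sum borel_measurable_times borel_measurable_const
        borel_measurable_indicator) auto
  then show ?thesis
    by (rule measurable_cong[THEN iffD1, rotated])
      (use assms finite_rv_sum_indicator[of W _ "space M" Z \<phi>] in \<open>auto simp: finite_rv_def\<close>)
qed

lemma finite_rv_pair:
  assumes "finite_rv M W Z1" "finite_rv M W' Z2"
  shows "finite_rv M (W \<times> W') (\<lambda>w. (Z1 w, Z2 w))"
proof -
  have "{w\<in>space M. (Z1 w, Z2 w) = z} = {w\<in>space M. Z1 w = fst z} \<inter> {w\<in>space M. Z2 w = snd z}" for z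
    by (cases z) auto
  then show ?thesis
    using assms unfolding finite_rv_def by auto
qed

context finite_measure
begin

lemma finite_rv_integrable:
  fixes \<phi> :: "'z \<Rightarrow> real"
  assumes "finite_rv M W Z"
  shows "integrable M (\<lambda>w. \<phi> (Z w))"
proof (rule integrable_const_bound[where B="\<Sum>z\<in>W. \<bar>\<phi> z\<bar>"])
  show "AE w in M. norm (\<phi> (Z w)) \<le> (\<Sum>z\<in>W. \<bar>\<phi> z\<bar>)"
    using assms unfolding finite_rv_def
    by (intro AE_I2) (auto intro: member_le_sum[where f="\<lambda>z. \<bar>\<phi> z\<bar>"])
qed (rule finite_rv_measurable[OF assms])

lemma finite_rv_integral:
  fixes \<phi> :: "'z \<Rightarrow> real"
  assumes "finite_rv M W Z"
  shows "(\<integral>w. \<phi> (Z w) \<partial>M) = (\<Sum>z\<in>W. \<phi> z * measure M {w\<in>space M. Z w = z})"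
proof -
  have "(\<integral>w. \<phi> (Z w) \<partial>M) = (\<integral>w. (\<Sum>z\<in>W. \<phi> z * indicator {w'\<in>space M. Z w' = z} w) \<partial>M)"
    using assms finite_rv_sum_indicator[of W _ "space M" Z \<phi>]
    by (intro Bochner_Integration.integral_cong) (auto simp: finite_rv_def)
  also have "\<dots> = (\<Sum>z\<in>W. \<phi> z * measure M {w\<in>space M. Z w = z})"
    using assms unfolding finite_rv_def
    by (subst Bochner_Integration.integral_sum)
      (auto simp: less_top[symmetric])
  finally show ?thesis .
qed

lemma finite_rv_covariance_bound:
  fixes \<phi> \<psi> :: "'z \<Rightarrow> real"
  assumes Z1: "finite_rv M W Z1" and Z2: "finite_rv M W Z2"
    and \<phi>B: "\<And>z. z \<in> W \<Longrightarrow> \<bar>\<phi> z\<bar> \<le> B" and \<psi>B: "\<And>z. z \<in> W \<Longrightarrow> \<bar>\<psi> z\<bar> \<le> B"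
    and mix: "\<And>z1 z2. \<bar>measure M ({w\<in>space M. Z1 w = z1} \<inter> {w\<in>space M. Z2 w = z2})
        - measure M {w\<in>space M. Z1 w = z1} * measure M {w\<in>space M. Z2 w = z2}\<bar> \<le> a"
  shows "\<bar>(\<integral>w. \<phi> (Z1 w) * \<psi> (Z2 w) \<partial>M) - (\<integral>w. \<phi> (Z1 w) \<partial>M) * (\<integral>w. \<psi> (Z2 w) \<partial>M)\<bar>
     \<le> real (card W) ^ 2 * B ^ 2 * a"
proof -
  define P where "P z1 z2 = measure M ({w\<in>space M. Z1 w = z1} \<inter> {w\<in>space M. Z2 w = z2})" for z1 z2
  define P1 where "P1 z1 = measure M {w\<in>space M. Z1 w = z1}" for z1
  define P2 where "P2 z2 = measure M {w\<in>space M. Z2 w = z2}" for z2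
  have W: "finite W" using Z1 by (simp add: finite_rv_def)
  have pair_events: "{w\<in>space M. (Z1 w, Z2 w) = z} = {w\<in>space M. Z1 w = fst z} \<inter> {w\<in>space M. Z2 w = snd z}"
    for z by (cases z) auto
  have "(\<integral>w. \<phi> (Z1 w) * \<psi> (Z2 w) \<partial>M) = (\<Sum>z\<in>W \<times> W. \<phi> (fst z) * \<psi> (snd z) * P (fst z) (snd z))"
    using finite_rv_integral[OF finite_rv_pair[OF Z1 Z2], of "\<lambda>z. \<phi> (fst z) * \<psi> (snd z)"]
    by (simp add: pair_events P_def)
  also have "\<dots> = (\<Sum>z1\<in>W. \<Sum>z2\<in>W. \<phi> z1 * \<psi> z2 * P z1 z2)"
    by (simp add: sum.cartesian_product split_beta)
  finally have "(\<integral>w. \<phi> (Z1 w) * \<psi> (Z2 w) \<partial>M) - (\<integral>w. \<phi> (Z1 w) \<partial>M) * (\<integral>w. \<psi> (Z2 w) \<partial>M)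
     = (\<Sum>z1\<in>W. \<Sum>z2\<in>W. \<phi> z1 * \<psi> z2 * (P z1 z2 - P1 z1 * P2 z2))"
    using finite_rv_integral[OF Z1, of \<phi>] finite_rv_integral[OF Z2, of \<psi>]
    by (simp add: P1_def P2_def sum_product sum_subtractf[symmetric] algebra_simps)
  also have "\<bar>\<dots>\<bar> \<le> (\<Sum>z1\<in>W. \<Sum>z2\<in>W. \<bar>\<phi> z1\<bar> * \<bar>\<psi> z2\<bar> * \<bar>P z1 z2 - P1 z1 * P2 z2\<bar>)"
    by (rule order.trans[OF sum_abs], rule sum_mono, rule order.trans[OF sum_abs]) (simp add: abs_mult)
  also have "\<dots> \<le> (\<Sum>z1\<in>W. \<Sum>z2\<in>W. B * B * a)"
    using \<phi>B \<psi>B mix unfolding P_def P1_def P2_def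
    by (intro sum_mono mult_mono) (auto intro: order_trans[OF abs_ge_zero])
  also have "\<dots> = real (card W) ^ 2 * B ^ 2 * a"
    by (simp add: power2_eq_square)
  finally show ?thesis .
qed

end

context prob_space
begin

lemma second_moment_centered_sum:
  fixes X :: "'k \<Rightarrow> 'a \<Rightarrow> real"
  assumes I: "finite I"
    and int: "\<And>k. k \<in> I \<Longrightarrow> integrable M (X k)"
    and int2: "\<And>k l. k \<in> I \<Longrightarrow> l \<in> I \<Longrightarrow> integrable M (\<lambda>w. X k w * X l w)"
  shows "integrable M (\<lambda>w. (\<Sum>k\<in>I. X k w - (\<integral>w'. X k w' \<partial>M))\<^sup>2)"
    and "(\<integral>w. (\<Sum>k\<in>I. X k w - (\<integral>w'. X k w' \<partial>M))\<^sup>2 \<partial>M)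
       = (\<Sum>k\<in>I. \<Sum>l\<in>I. (\<integral>w. X k w * X l w \<partial>M) - (\<integral>w. X k w \<partial>M) * (\<integral>w. X l w \<partial>M))"
proof -
  define \<mu> where "\<mu> k = (\<integral>w. X k w \<partial>M)" for k
  have expand: "(\<Sum>k\<in>I. X k w - \<mu> k)\<^sup>2
      = (\<Sum>k\<in>I. \<Sum>l\<in>I. X k w * X l w - \<mu> l * X k w - \<mu> k * X l w + \<mu> k * \<mu> l)" for w
    by (simp add: power2_eq_square sum_product algebra_simps)
  have int_term: "integrable M (\<lambda>w. X k w * X l w - \<mu> l * X k w - \<mu> k * X l w + \<mu> k * \<mu> l)"
    if "k \<in> I" "l \<in> I" for k l
    using int that int2 that by auto
  have cov: "(\<integral>w. X k w * X l w - \<mu> l * X k w - \<mu> k * X l w + \<mu> k * \<mu> l \<partial>M)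
      = (\<integral>w. X k w * X l w \<partial>M) - \<mu> k * \<mu> l" if "k \<in> I" "l \<in> I" for k l
    using int that int2 that by (simp add: \<mu>_def prob_space)
  show "integrable M (\<lambda>w. (\<Sum>k\<in>I. X k w - (\<integral>w'. X k w' \<partial>M))\<^sup>2)"
    unfolding \<mu>_def[symmetric] expand by (intro Bochner_Integration.integrable_sum int_term)
  show "(\<integral>w. (\<Sum>k\<in>I. X k w - (\<integral>w'. X k w' \<partial>M))\<^sup>2 \<partial>M)
       = (\<Sum>k\<in>I. \<Sum>l\<in>I. (\<integral>w. X k w * X l w \<partial>M) - (\<integral>w. X k w \<partial>M) * (\<integral>w. X l w \<partial>M))"
    unfolding \<mu>_def[symmetric] expand
    by (simp add: Bochner_Integration.integral_sum int_term cov)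
qed

lemma finite_rv_sum_deviation:
  fixes Z :: "'k \<Rightarrow> 'a \<Rightarrow> 'z" and \<phi> :: "'z \<Rightarrow> real" and a :: "'k \<Rightarrow> 'k \<Rightarrow> real"
  assumes I: "finite I" and Z: "\<And>k. k \<in> I \<Longrightarrow> finite_rv M W (Z k)"
    and \<phi>B: "\<And>z. z \<in> W \<Longrightarrow> \<bar>\<phi> z\<bar> \<le> B"
    and mix: "\<And>k l z1 z2. k \<in> I \<Longrightarrow> l \<in> I \<Longrightarrow>
       \<bar>measure M ({w\<in>space M. Z k w = z1} \<inter> {w\<in>space M. Z l w = z2})
        - measure M {w\<in>space M. Z k w = z1} * measure M {w\<in>space M. Z l w = z2}\<bar> \<le> a k l"
    and row: "\<And>k. k \<in> I \<Longrightarrow> (\<Sum>l\<in>I. a k l) \<le> R"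
    and t: "t > 0"
  shows "measure M {w\<in>space M. t \<le> \<bar>\<Sum>k\<in>I. \<phi> (Z k w) - (\<integral>w'. \<phi> (Z k w') \<partial>M)\<bar>}
     \<le> real (card I) * real (card W) ^ 2 * B ^ 2 * R / t ^ 2"
proof -
  define X where "X k w = \<phi> (Z k w)" for k w
  define Y where "Y w = (\<Sum>k\<in>I. X k w - (\<integral>w'. X k w' \<partial>M))" for w
  have int: "integrable M (X k)" if "k \<in> I" for k
    unfolding X_def by (rule finite_rv_integrable[OF Z[OF that]])
  have int2: "integrable M (\<lambda>w. X k w * X l w)" if "k \<in> I" "l \<in> I" for k l
    unfolding X_def
    using finite_rv_integrable[OF finite_rv_pair[OF Z Z], of k l "\<lambda>z. \<phi> (fst z) * \<phi> (snd z)"] that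
    by simp
  have "(\<integral>w. (Y w)\<^sup>2 \<partial>M)
      = (\<Sum>k\<in>I. \<Sum>l\<in>I. (\<integral>w. X k w * X l w \<partial>M) - (\<integral>w. X k w \<partial>M) * (\<integral>w. X l w \<partial>M))"
    unfolding Y_def by (rule second_moment_centered_sum(2)[OF I int int2])
  also have "\<dots> \<le> (\<Sum>k\<in>I. \<Sum>l\<in>I. real (card W) ^ 2 * B ^ 2 * a k l)"
  proof (intro sum_mono)
    fix k l assume "k \<in> I" "l \<in> I"
    then show "(\<integral>w. X k w * X l w \<partial>M) - (\<integral>w. X k w \<partial>M) * (\<integral>w. X l w \<partial>M)
        \<le> real (card W) ^ 2 * B ^ 2 * a k l"
      unfolding X_def using finite_rv_covariance_bound[OF Z Z \<phi>B \<phi>B mix] by fastforce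
  qed
  also have "\<dots> \<le> (\<Sum>k\<in>I. real (card W) ^ 2 * B ^ 2 * R)"
    by (intro sum_mono) (simp add: sum_distrib_left[symmetric] mult_left_mono row)
  finally have second_moment: "(\<integral>w. (Y w)\<^sup>2 \<partial>M) \<le> real (card I) * real (card W) ^ 2 * B ^ 2 * R"
    by (simp add: mult_ac)
  have "Y \<in> borel_measurable M"
    unfolding Y_def X_def
    by (intro borel_measurable_sum borel_measurable_diff borel_measurable_const)
      (use finite_rv_measurable[OF Z, of _ \<phi>] in auto)
  then have "measure M {w\<in>space M. t \<le> \<bar>Y w\<bar>} \<le> (\<integral>w. (Y w)\<^sup>2 \<partial>M) / t\<^sup>2"
    using second_moment_centered_sum(1)[OF I int int2] t
    unfolding Y_def by (intro second_moment_method) auto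
  also have "\<dots> \<le> real (card I) * real (card W) ^ 2 * B ^ 2 * R / t ^ 2"
    using second_moment by (simp add: divide_right_mono)
  finally show ?thesis
    unfolding Y_def X_def .
qed

end

text \<open>Counting lemma behind (A3)+(A4): group the indices \<open>l\<close> by their distance \<open>d l\<close> from a
  fixed index; at most \<open>C\<close> lie at distance 0 (weight 1), at most \<open>C j^(rho-1)\<close> at distance
  \<open>j\<close> (weight \<open>alpha j\<close>), so the total weight is at most \<open>C + C * sum_j alpha j j^(rho-1)\<close>.\<close>
lemma mixing_row_sum_bound:
  fixes d :: "'k \<Rightarrow> nat" and \<alpha> :: "nat \<Rightarrow> real"
  assumes I: "finite I"
    and card0: "real (card {l\<in>I. d l = 0}) \<le> C"
    and card_shell: "\<And>j. j \<ge> 1 \<Longrightarrow> real (card {l\<in>I. d l = j}) \<le> C * real j powr (\<rho> - 1)"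
    and \<alpha>_nonneg: "\<And>j. \<alpha> j \<ge> 0"
    and summable: "summable (\<lambda>j. \<alpha> (Suc j) * real (Suc j) powr (\<rho> - 1))"
  shows "(\<Sum>l\<in>I. if d l = 0 then 1 else \<alpha> (d l))
      \<le> C + C * (\<Sum>j. \<alpha> (Suc j) * real (Suc j) powr (\<rho> - 1))"
proof -
  define G where "G j = real (card {l\<in>I. d l = j}) * (if j = 0 then 1 else \<alpha> j)" for j
  define f where "f j = \<alpha> j * real j powr (\<rho> - 1)" for j
  have C: "C \<ge> 0" using card0 by (meson of_nat_0_le_iff order_trans)
  have G_nonneg: "G j \<ge> 0" for j unfolding G_def using \<alpha>_nonneg by simp
  have "(\<Sum>l\<in>I. if d l = 0 then 1 else \<alpha> (d l)) = (\<Sum>j\<in>d ` I. G j)"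
    unfolding G_def by (subst sum.image_gen[OF I]) (auto intro!: sum.cong)
  also have "\<dots> \<le> (\<Sum>j\<in>insert 0 (d ` I - {0}). G j)"
    using I G_nonneg by (intro sum_mono2) auto
  also have "\<dots> = G 0 + (\<Sum>j\<in>Suc ` (Suc -` d ` I). G j)"
    using I by (subst sum.insert) (auto intro!: sum.cong simp: image_iff gr0_conv_Suc)
  also have "\<dots> \<le> C + (\<Sum>j\<in>Suc -` d ` I. C * f (Suc j))"
  proof (intro add_mono)
    show "G 0 \<le> C" using card0 by (simp add: G_def)
    have "G (Suc j) \<le> C * f (Suc j)" for j
      using mult_right_mono[OF card_shell \<alpha>_nonneg, of "Suc j" "Suc j"]
      by (simp add: G_def f_def mult_ac)
    then show "(\<Sum>j\<in>Suc ` (Suc -` d ` I). G j) \<le> (\<Sum>j\<in>Suc -` d ` I. C * f (Suc j))"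
      by (subst sum.reindex) (auto intro!: sum_mono)
  qed
  also have "(\<Sum>j\<in>Suc -` d ` I. C * f (Suc j)) \<le> C * (\<Sum>j. f (Suc j))"
    unfolding sum_distrib_left[symmetric] f_def
    using I \<alpha>_nonneg
    by (intro mult_left_mono[OF sum_le_suminf[OF summable]] C finite_vimageI) auto
  finally show ?thesis
    unfolding f_def by simp
qed

lemma (in prob_space) integral_mult_cond_exp:
  fixes \<pi> :: "'a \<Rightarrow> 'b" and Y :: "'a \<Rightarrow> real"
  assumes \<pi>: "\<pi> \<in> measurable M (count_space UNIV)"
    and Y: "Y \<in> borel_measurable M"
    and int: "integrable M (\<lambda>w. f (\<pi> w) * Y w)"
    and cond_exp: "AE w in M. real_cond_exp M (vimage_algebra (space M) \<pi> (count_space UNIV)) Y w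
                              = G (\<pi> w)"
  shows "(\<integral>w. f (\<pi> w) * Y w \<partial>M) = (\<integral>w. f (\<pi> w) * G (\<pi> w) \<partial>M)"
proof -
  define \<F> where "\<F> = vimage_algebra (space M) \<pi> (count_space UNIV)"
  interpret finite_measure_subalgebra M \<F>
    by unfold_locales
      (use measurable_iff_sets[THEN iffD1, OF \<pi>] in \<open>simp add: subalgebra_def \<F>_def\<close>)
  have \<pi>\<F>: "\<pi> \<in> measurable \<F> (count_space UNIV)"
    unfolding \<F>_def by (rule measurable_vimage_algebra1) auto
  have f\<F>: "(\<lambda>w. f (\<pi> w)) \<in> borel_measurable \<F>"
    by (rule measurable_compose[OF \<pi>\<F>]) simp
  have "(\<integral>w. f (\<pi> w) * Y w \<partial>M) = (\<integral>w. f (\<pi> w) * real_cond_exp M \<F> Y w \<partial>M)"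
    by (rule real_cond_exp_intg(2)[OF int f\<F> Y, symmetric])
  also have "\<dots> = (\<integral>w. f (\<pi> w) * G (\<pi> w) \<partial>M)"
  proof (rule integral_cong_AE)
    show "(\<lambda>w. f (\<pi> w) * real_cond_exp M \<F> Y w) \<in> borel_measurable M"
      using measurable_from_subalg[OF subalg f\<F>] by measurable
    show "(\<lambda>w. f (\<pi> w) * G (\<pi> w)) \<in> borel_measurable M"
      by (rule measurable_compose[OF \<pi>]) simp
    show "AE w in M. f (\<pi> w) * real_cond_exp M \<F> Y w = f (\<pi> w) * G (\<pi> w)"
      using cond_exp unfolding \<F>_def by auto
  qed
  finally show ?thesis .
qed

lemma ratio_deviation:
  fixes f h g Ef Q c e :: real
  assumes f: "\<bar>f - Ef\<bar> < c" and Ef: "2 * c \<le> Ef"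
    and q: "\<bar>(h - g * f) - Q\<bar> < e * c / 2" and Q: "\<bar>Q\<bar> \<le> e * c / 2"
  shows "\<bar>h / f - g\<bar> \<le> e"
proof -
  have f_pos: "c < f" using f Ef by linarith
  have c_pos: "0 < c" using f by linarith
  have dev: "\<bar>h - g * f\<bar> < e * c" using q Q by linarith
  then have "0 < e * c" by (meson abs_ge_zero le_less_trans)
  then have "0 < e" using c_pos by (simp add: zero_less_mult_iff)
  have "e * c \<le> e * f" using f_pos \<open>0 < e\<close> by simp
  with dev have "\<bar>h - g * f\<bar> < e * f" by linarith
  then have "\<bar>h - g * f\<bar> / f \<le> e" using f_pos c_pos by (simp add: divide_le_eq)
  moreover have "h / f - g = (h - g * f) / f" using f_pos c_pos by (simp add: field_simps)
  ultimately show ?thesis using f_pos c_pos by (simp add: abs_div)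
qed

lemma Liminf_pos_eventually_lower_bound:
  fixes f :: "'i \<Rightarrow> real"
  assumes "Liminf F (\<lambda>x. ereal (f x)) > 0"
  obtains c where "0 < c" "eventually (\<lambda>x. 2 * c \<le> f x) F"
proof -
  obtain c0 where c0: "0 < ereal c0" "ereal c0 < Liminf F (\<lambda>x. ereal (f x))"
    using ereal_dense2[OF assms] by blast
  have "eventually (\<lambda>x. 2 * (c0 / 2) \<le> f x) F"
    using less_LiminfD[OF c0(2)] by eventually_elim auto
  then show thesis
    using c0(1) that[of "c0 / 2"] by simp
qed

lemma eventually_NT_limit:
  "eventually (\<lambda>(N, T). K \<le> N * T \<and> p + 2 < T) (NT_limit p)"
  unfolding NT_limit_def eventually_inf_principal eventually_filtercomap
  by (rule exI[of _ "\<lambda>y. K \<le> y"]) (auto simp: eventually_ge_at_top)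

text \<open>The normalisation \<open>1 / (N (T - p - 2))\<close> tends to 0 as \<open>N T \<rightarrow> \<infinity>\<close>, since it is at
  most \<open>(p + 3) / (N T)\<close> once \<open>T > p + 2\<close>.\<close>
lemma NT_limit_inverse_sample_size:
  "((\<lambda>(N, T). 1 / (real N * (real T - real p - 2))) \<longlongrightarrow> 0) (NT_limit p)"
proof -
  have "filterlim (\<lambda>(N, T). N * T) at_top (NT_limit p)"
    unfolding NT_limit_def
    by (rule filterlim_mono[OF filterlim_filtercomap order_refl inf_le1])
  then have "filterlim (\<lambda>(N, T). real (N * T)) at_infinity (NT_limit p)"
    unfolding split_beta'
    by (intro filterlim_at_top_imp_at_infinity filterlim_compose[OF filterlim_real_sequentially])
  then have upper_lim: "((\<lambda>(N, T). (real p + 3) / real (N * T)) \<longlongrightarrow> 0) (NT_limit p)"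
    using tendsto_divide_0[OF tendsto_const] by (simp add: case_prod_beta')
  have lower: "eventually (\<lambda>(N, T). 0 \<le> 1 / (real N * (real T - real p - 2))) (NT_limit p)"
    using eventually_NT_limit[of 1 p] by eventually_elim auto
  have upper: "eventually (\<lambda>(N, T). 1 / (real N * (real T - real p - 2))
      \<le> (real p + 3) / real (N * T)) (NT_limit p)"
    using eventually_NT_limit[of 1 p]
  proof eventually_elim
    case (elim x)
    obtain N T where x: "x = (N, T)" by (cases x)
    with elim have T: "p + 2 < T" and N: "1 \<le> N" by auto
    have "(real T - real p - 2) * (real p + 3) - real T = (real p + 2) * (real T - real p - 3)"
      by (simp add: algebra_simps)
    also have "\<dots> \<ge> 0" using T by auto
    finally have "real T \<le> (real T - real p - 2) * (real p + 3)" by simp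
    then have "real N * real T \<le> real N * ((real T - real p - 2) * (real p + 3))"
      by (rule mult_left_mono) simp
    moreover have "0 < real N * (real T - real p - 2)" "0 < real N * real T"
      using T N by auto
    moreover have "1 / m \<le> c / a" if "0 < m" "0 < a" "a \<le> m * c" for a m c :: real
      using that by (simp add: divide_simps mult.commute)
    ultimately show ?case
      unfolding x by (simp add: mult_ac)
  qed
  show ?thesis
    unfolding case_prod_beta'
    by (rule tendsto_sandwich[OF lower[unfolded case_prod_beta'] upper[unfolded case_prod_beta']
          tendsto_const upper_lim[unfolded case_prod_beta']])
qed

lemma sum_idx:
  "(\<Sum>t\<in>{p..T-2}. \<Sum>i\<in>{1..N}. H i t) = (\<Sum>k\<in>idx p N T. H (fst k) (snd k))"
  unfolding idx_def by (subst sum.swap) (simp add: sum.cartesian_product split_beta)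

lemma card_idx_le:
  assumes "p + 2 < T"
  shows "real (card (idx p N T)) \<le> 2 * (real N * (real T - real p - 2))"
proof -
  have "card (idx p N T) = N * (T - 1 - p)"
    unfolding idx_def using assms by (simp add: card_cartesian_product)
  then have "real (card (idx p N T)) = real N * (real T - 1 - real p)"
    using assms by simp
  also have "\<dots> \<le> real N * (2 * (real T - real p - 2))"
    using assms by (intro mult_left_mono) auto
  finally show ?thesis by (simp add: algebra_simps)
qed

definition possible_datacubes :: "nat \<Rightarrow> 's::finite datacube set" where
  "possible_datacubes Mc = {h. \<forall>s'. fst (h s') \<le> Mc \<and> snd (h s') \<le> Mc}"

lemma finite_possible_datacubes: "finite (possible_datacubes Mc)"
proof (rule finite_subset)
  show "possible_datacubes Mc \<subseteq> PiE UNIV (\<lambda>_. {0..Mc} \<times> {0..Mc})"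
    unfolding possible_datacubes_def PiE_def by (auto simp: mem_Times_iff)
qed (intro finite_PiE; simp)

text \<open>The bandwidth limit (A2) and the
  positivity of the mean of \<open>f_hat\<close> are hypotheses of the final lemma only.\<close>
locale datacube_model =
  fixes M :: "nat \<Rightarrow> nat \<Rightarrow> 'a measure"
    and n nplus :: "nat \<Rightarrow> nat \<Rightarrow> nat \<Rightarrow> nat \<Rightarrow> 's::finite \<Rightarrow> 'a \<Rightarrow> nat"
    and g :: "'s \<Rightarrow> 's datacube \<Rightarrow> real"
    and D :: "'s datacube \<Rightarrow> 's datacube \<Rightarrow> real"
    and b :: "nat \<Rightarrow> nat \<Rightarrow> real"
    and p Mc :: nat
    and F :: "nat \<Rightarrow> nat \<Rightarrow> nat \<Rightarrow> nat \<Rightarrow> 'a measure"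
    and graph_dist :: "nat \<Rightarrow> nat \<Rightarrow> nat \<times> nat \<Rightarrow> nat \<times> nat \<Rightarrow> nat"
    and \<alpha> :: "nat \<Rightarrow> real"
    and \<rho> C :: real
    and s :: 's
    and hq :: "'s datacube"
  assumes prob: "\<And>N T. prob_space (M N T)"
    and meas_n: "\<And>N T i t s'. n N T i t s' \<in> measurable (M N T) (count_space UNIV)"
    and meas_nplus: "\<And>N T i t s'. nplus N T i t s' \<in> measurable (M N T) (count_space UNIV)"
    and nplus_le: "\<And>N T i t s' w. w \<in> space (M N T) \<Longrightarrow> nplus N T i t s' w \<le> n N T i t s' w"
    and A1: "\<And>N T i t s' w. w \<in> space (M N T) \<Longrightarrow> n N T i t s' w \<le> Mc"
    and g_range: "\<And>s' h. 0 \<le> g s' h \<and> g s' h \<le> 1"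
    and model: "\<And>N T i t s'. (i, t) \<in> idx p N T \<Longrightarrow>
        AE w in M N T.
          real_cond_exp (M N T)
            (vimage_algebra (space (M N T))
               (\<lambda>w. (datacube (n N T) (nplus N T) i t w, n N T i (t + 1) s' w)) (count_space UNIV))
            (\<lambda>w. real (nplus N T i (t + 1) s' w)) w
          = real (n N T i (t + 1) s' w) * g s' (datacube (n N T) (nplus N T) i t w)"
    and D_nonneg: "\<And>h h'. D h h' \<ge> 0"
    and D_zero: "\<And>h h'. D h h' = 0 \<longleftrightarrow> h = h'"
    and b_range: "\<And>N T. 0 < b N T \<and> b N T < 1"
    and F_sub: "\<And>N T i t. (i, t) \<in> idx p N T \<Longrightarrow> subalgebra (M N T) (F N T i t)"
    and F_h: "\<And>N T i t. (i, t) \<in> idx p N T \<Longrightarrow>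
        datacube (n N T) (nplus N T) i t \<in> measurable (F N T i t) (count_space UNIV)"
    and F_n: "\<And>N T i t s'. (i, t) \<in> idx p N T \<Longrightarrow>
        n N T i (t + 1) s' \<in> measurable (F N T i t) (count_space UNIV)"
    and F_nplus: "\<And>N T i t s'. (i, t) \<in> idx p N T \<Longrightarrow>
        nplus N T i (t + 1) s' \<in> measurable (F N T i t) (count_space UNIV)"
    and alpha_nonneg: "\<And>k. \<alpha> k \<ge> 0"
    and A3_mixing: "\<And>N T i t i' t' k A B. (i, t) \<in> idx p N T \<Longrightarrow> (i', t') \<in> idx p N T \<Longrightarrow>
        k \<ge> 1 \<Longrightarrow> graph_dist N T (i, t) (i', t') \<ge> k \<Longrightarrow>
        A \<in> sets (F N T i t) \<Longrightarrow> B \<in> sets (F N T i' t') \<Longrightarrow>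
        \<bar>measure (M N T) (A \<inter> B) - measure (M N T) A * measure (M N T) B\<bar> \<le> \<alpha> k"
    and A3_sum: "summable (\<lambda>k. \<alpha> (Suc k) * real (Suc k) powr (\<rho> - 1))"
    and A4_zero: "\<And>N T i t. (i, t) \<in> idx p N T \<Longrightarrow>
        real (card {(i', t') \<in> idx p N T. graph_dist N T (i, t) (i', t') = 0}) \<le> C"
    and A4_d: "\<And>N T i t d. (i, t) \<in> idx p N T \<Longrightarrow> d \<ge> 1 \<Longrightarrow>
        real (card {(i', t') \<in> idx p N T. graph_dist N T (i, t) (i', t') = d}) \<le> C * real d powr (\<rho> - 1)"
begin

definition observation :: "nat \<Rightarrow> nat \<Rightarrow> nat \<times> nat \<Rightarrow> 'a \<Rightarrow> 's datacube \<times> nat \<times> nat" where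
  "observation N T k w =
     (datacube (n N T) (nplus N T) (fst k) (snd k) w,
      n N T (fst k) (snd k + 1) s w, nplus N T (fst k) (snd k + 1) s w)"

definition observation_space :: "('s datacube \<times> nat \<times> nat) set" where
  "observation_space = possible_datacubes Mc \<times> {0..Mc} \<times> {0..Mc}"

lemma observation_in_space: "w \<in> space (M N T) \<Longrightarrow> observation N T k w \<in> observation_space"
  using A1 nplus_le order_trans
  unfolding observation_def observation_space_def possible_datacubes_def datacube_def
  by (simp, blast)

lemma observation_event_F:
  assumes "k \<in> idx p N T"
  shows "{w\<in>space (M N T). observation N T k w = z} \<in> sets (F N T (fst k) (snd k))"
proof -
  obtain i t where k: "k = (i, t)" by (cases k)
  obtain h a c where z: "z = (h, a, c)" by (cases z)
  have "space (F N T i t) = space (M N T)"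
    using F_sub assms k by (simp add: subalgebra_def)
  then have "{w\<in>space (M N T). observation N T k w = z} =
      (datacube (n N T) (nplus N T) i t -` {h} \<inter> space (F N T i t)) \<inter>
      (n N T i (t + 1) s -` {a} \<inter> space (F N T i t)) \<inter>
      (nplus N T i (t + 1) s -` {c} \<inter> space (F N T i t))"
    unfolding observation_def k z by auto
  also have "\<dots> \<in> sets (F N T i t)"
    using assms k
    by (intro sets.Int measurable_sets[OF F_h] measurable_sets[OF F_n] measurable_sets[OF F_nplus]) auto
  finally show ?thesis unfolding k by simp
qed

lemma observation_finite_rv:
  assumes "k \<in> idx p N T"
  shows "finite_rv (M N T) observation_space (observation N T k)"
  unfolding finite_rv_def
proof (intro conjI ballI allI)
  show "finite observation_space"
    unfolding observation_space_def using finite_possible_datacubes by auto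
  have "subalgebra (M N T) (F N T (fst k) (snd k))"
    using F_sub assms by (cases k) auto
  then show "{w\<in>space (M N T). observation N T k w = z} \<in> sets (M N T)" for z
    using observation_event_F[OF assms] unfolding subalgebra_def by blast
qed (rule observation_in_space)

definition dependence :: "nat \<Rightarrow> nat \<Rightarrow> nat \<times> nat \<Rightarrow> nat \<times> nat \<Rightarrow> real" where
  "dependence N T k l = (if graph_dist N T k l = 0 then 1 else \<alpha> (graph_dist N T k l))"

definition mixing_bound :: real where
  "mixing_bound = C + C * (\<Sum>j. \<alpha> (Suc j) * real (Suc j) powr (\<rho> - 1))"

lemma observation_mixing:
  assumes k: "k \<in> idx p N T" and l: "l \<in> idx p N T"
  shows "\<bar>measure (M N T) ({w\<in>space (M N T). observation N T k w = z1} \<inter>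
                           {w\<in>space (M N T). observation N T l w = z2})
       - measure (M N T) {w\<in>space (M N T). observation N T k w = z1} *
         measure (M N T) {w\<in>space (M N T). observation N T l w = z2}\<bar>
     \<le> dependence N T k l"
proof (cases "graph_dist N T k l = 0")
  case True
  interpret prob_space "M N T" by (rule prob)
  have "\<bar>prob (A \<inter> B) - prob A * prob B\<bar> \<le> 1" for A B
  proof -
    have "0 \<le> prob A * prob B" "prob A * prob B \<le> 1"
      by (auto intro: mult_le_one)
    then show ?thesis
      using prob_le_1[of "A \<inter> B"] measure_nonneg[of "M N T" "A \<inter> B"]
      unfolding abs_le_iff by linarith
  qed
  then show ?thesis
    unfolding dependence_def using True by simp
next
  case False
  obtain i t i' t' where kl: "k = (i, t)" "l = (i', t')" by (cases k, cases l)
  show ?thesis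
    unfolding dependence_def using False
    by (simp, intro A3_mixing[of i t N T i' t'])
      (use k l kl observation_event_F[OF k] observation_event_F[OF l] in auto)
qed

lemma dependence_row_sum:
  assumes k: "k \<in> idx p N T"
  shows "(\<Sum>l\<in>idx p N T. dependence N T k l) \<le> mixing_bound"
proof -
  obtain i t where kk: "k = (i, t)" by (cases k)
  have shell: "{l\<in>idx p N T. graph_dist N T (i, t) l = j}
      = {(i', t') \<in> idx p N T. graph_dist N T (i, t) (i', t') = j}" for j
    by auto
  show ?thesis
    unfolding dependence_def mixing_bound_def kk
  proof (rule mixing_row_sum_bound[OF _ _ _ alpha_nonneg A3_sum])
    show "finite (idx p N T)" by (simp add: idx_def)
    show "real (card {l\<in>idx p N T. graph_dist N T (i, t) l = 0}) \<le> C"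
      using A4_zero k unfolding kk shell by blast
    show "real (card {l\<in>idx p N T. graph_dist N T (i, t) l = j}) \<le> C * real j powr (\<rho> - 1)"
      if "j \<ge> 1" for j
      using A4_d k that unfolding kk shell by blast
  qed
qed

lemma mixing_bound_nonneg: "0 \<le> mixing_bound"
proof -
  have "(1, p) \<in> idx p 1 (p + 3)" unfolding idx_def by auto
  from A4_zero[OF this] have "0 \<le> C" by (meson of_nat_0_le_iff order_trans)
  moreover have "0 \<le> (\<Sum>j. \<alpha> (Suc j) * real (Suc j) powr (\<rho> - 1))"
    by (intro suminf_nonneg A3_sum mult_nonneg_nonneg alpha_nonneg) simp
  ultimately show ?thesis unfolding mixing_bound_def by simp
qed

definition kernel_term :: "real \<Rightarrow> 's datacube \<times> nat \<times> nat \<Rightarrow> real" where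
  "kernel_term \<beta> z = (case z of (h, a, c) \<Rightarrow> \<beta> powr D h hq * real a)"

definition residual_term :: "real \<Rightarrow> 's datacube \<times> nat \<times> nat \<Rightarrow> real" where
  "residual_term \<beta> z = (case z of (h, a, c) \<Rightarrow> \<beta> powr D h hq * (real c - g s hq * real a))"

lemma kernel_weight_bounds:
  assumes "0 < \<beta>" "\<beta> < 1"
  shows "0 \<le> \<beta> powr D h hq" "\<beta> powr D h hq \<le> 1"
  using assms D_nonneg by (auto intro: powr_le1)

lemma kernel_term_bound:
  assumes "0 < \<beta>" "\<beta> < 1" "z \<in> observation_space"
  shows "\<bar>kernel_term \<beta> z\<bar> \<le> Mc"
proof -
  obtain h a c where z: "z = (h, a, c)" by (cases z)
  have "\<beta> powr D h hq * real a \<le> real a"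
    using kernel_weight_bounds[OF assms(1,2)] by (intro mult_left_le_one_le) auto
  then show ?thesis
    using assms(3) kernel_weight_bounds[OF assms(1,2), of h]
    unfolding z kernel_term_def observation_space_def by (simp add: abs_mult)
qed

lemma residual_term_bound:
  assumes "0 < \<beta>" "\<beta> < 1" "z \<in> observation_space"
  shows "\<bar>residual_term \<beta> z\<bar> \<le> Mc"
proof -
  obtain h a c where z: "z = (h, a, c)" by (cases z)
  have ac: "a \<le> Mc" "c \<le> Mc" using assms(3) unfolding z observation_space_def by auto
  have "0 \<le> g s hq * real a" "g s hq * real a \<le> real a"
    using g_range[of s hq] by (auto intro: mult_left_le_one_le)
  then have "\<bar>real c - g s hq * real a\<bar> \<le> Mc" using ac by linarith
  moreover have "\<beta> powr D h hq * \<bar>real c - g s hq * real a\<bar> \<le> \<bar>real c - g s hq * real a\<bar>"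
    using kernel_weight_bounds[OF assms(1,2)] by (intro mult_left_le_one_le) auto
  ultimately show ?thesis
    using kernel_weight_bounds[OF assms(1,2), of h]
    unfolding z residual_term_def by (simp add: abs_mult)
qed

lemma f_hat_average:
  "f_hat D \<beta> p N T (n N T) (nplus N T) s hq w
     = (1 / (real N * (real T - real p - 2))) * (\<Sum>k\<in>idx p N T. kernel_term \<beta> (observation N T k w))"
  unfolding f_hat_def sum_idx by (simp add: kernel_term_def observation_def kernel_def)

lemma residual_average:
  "h_hat D \<beta> p N T (n N T) (nplus N T) s hq w - g s hq * f_hat D \<beta> p N T (n N T) (nplus N T) s hq w
     = (1 / (real N * (real T - real p - 2))) * (\<Sum>k\<in>idx p N T. residual_term \<beta> (observation N T k w))"
  unfolding f_hat_def h_hat_def sum_idx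
  by (simp add: residual_term_def observation_def kernel_def sum_distrib_left
      sum_subtractf[symmetric] algebra_simps)


lemma observation_average_deviation:
  fixes \<psi> :: "'s datacube \<times> nat \<times> nat \<Rightarrow> real" and c :: real
  assumes T: "p + 2 < T" and N: "1 \<le> N" and c: "0 < c"
    and \<psi>: "\<And>z. z \<in> observation_space \<Longrightarrow> \<bar>\<psi> z\<bar> \<le> Mc"
  shows "measure (M N T) {w\<in>space (M N T). real N * (real T - real p - 2) * c
           \<le> \<bar>\<Sum>k\<in>idx p N T. \<psi> (observation N T k w) - (\<integral>w'. \<psi> (observation N T k w') \<partial>M N T)\<bar>}
     \<le> 2 * (real (card observation_space) ^ 2 * real Mc ^ 2 * mixing_bound) / c\<^sup>2
        * (1 / (real N * (real T - real p - 2)))"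
proof -
  interpret prob_space "M N T" by (rule prob)
  define m where "m = real N * (real T - real p - 2)"
  define K where "K = real (card observation_space) ^ 2 * real Mc ^ 2 * mixing_bound"
  have m: "0 < m" unfolding m_def using T N by auto
  have K: "0 \<le> K" unfolding K_def using mixing_bound_nonneg by simp
  have "finite (idx p N T)" unfolding idx_def by simp
  from finite_rv_sum_deviation[OF this observation_finite_rv \<psi> observation_mixing
       dependence_row_sum mult_pos_pos[OF m c]]
  have "measure (M N T) {w\<in>space (M N T).
          m * c \<le> \<bar>\<Sum>k\<in>idx p N T. \<psi> (observation N T k w) - (\<integral>w'. \<psi> (observation N T k w') \<partial>M N T)\<bar>}
      \<le> real (card (idx p N T)) * K / (m * c)\<^sup>2"
    using m c unfolding K_def by (simp add: mult_ac)
  also have "\<dots> \<le> 2 * m * K / (m * c)\<^sup>2"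
    using card_idx_le[OF T] K unfolding m_def by (intro divide_right_mono mult_right_mono) auto
  also have "\<dots> = 2 * K / c\<^sup>2 * (1 / m)"
    using m c by (simp add: power2_eq_square field_simps)
  finally show ?thesis unfolding m_def K_def .
qed

text \<open>The smallest distance from \<open>hq\<close> to another possible datacube (capped at 1); it is
  positive because there are finitely many datacubes and \<open>D\<close> vanishes only on the diagonal.\<close>
definition kernel_gap :: real where
  "kernel_gap = Min (insert 1 ((\<lambda>h. D h hq) ` (possible_datacubes Mc - {hq})))"

lemma kernel_gap_pos: "0 < kernel_gap"
  unfolding kernel_gap_def using finite_possible_datacubes D_nonneg D_zero
  by (subst Min_gr_iff) (auto simp: order.strict_iff_order)

lemma kernel_gap_le: "h \<in> possible_datacubes Mc \<Longrightarrow> h \<noteq> hq \<Longrightarrow> kernel_gap \<le> D h hq"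
  unfolding kernel_gap_def using finite_possible_datacubes by (intro Min_le) auto

lemma observation_measurable:
  fixes \<psi> :: "'s datacube \<times> nat \<times> nat \<Rightarrow> real"
  shows "k \<in> idx p N T \<Longrightarrow> (\<lambda>w. \<psi> (observation N T k w)) \<in> borel_measurable (M N T)"
  by (rule finite_rv_measurable[OF observation_finite_rv])

lemma observation_integrable:
  fixes \<psi> :: "'s datacube \<times> nat \<times> nat \<Rightarrow> real"
  assumes "k \<in> idx p N T"
  shows "integrable (M N T) (\<lambda>w. \<psi> (observation N T k w))"
proof -
  interpret prob_space "M N T" by (rule prob)
  show ?thesis
    by (rule finite_rv_integrable[OF observation_finite_rv[OF assms]])
qed

lemma kernel_weighted_model:
  assumes k: "k \<in> idx p N T"
  shows "(\<integral>w. \<beta> powr D (fst (observation N T k w)) hq * real (snd (snd (observation N T k w))) \<partial>M N T)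
       = (\<integral>w. \<beta> powr D (fst (observation N T k w)) hq *
              (real (fst (snd (observation N T k w))) * g s (fst (observation N T k w))) \<partial>M N T)"
proof -
  interpret prob_space "M N T" by (rule prob)
  obtain i t where kk: "k = (i, t)" by (cases k)
  define \<pi> where "\<pi> w = (datacube (n N T) (nplus N T) i t w, n N T i (t + 1) s w)" for w
  have h_meas: "datacube (n N T) (nplus N T) i t \<in> measurable (M N T) (count_space UNIV)"
    using measurable_from_subalg[OF F_sub F_h] k kk by auto
  have \<pi>: "\<pi> \<in> measurable (M N T) (count_space UNIV)"
  proof (subst measurable_count_space_eq2_countable, intro conjI ballI)
    fix x :: "'s datacube \<times> nat"
    have "\<pi> -` {x} \<inter> space (M N T) =
        (datacube (n N T) (nplus N T) i t -` {fst x} \<inter> space (M N T)) \<inter>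
        (n N T i (t + 1) s -` {snd x} \<inter> space (M N T))"
      unfolding \<pi>_def by (cases x) auto
    also have "\<dots> \<in> sets (M N T)"
      by (intro sets.Int measurable_sets[OF h_meas] measurable_sets[OF meas_n]) auto
    finally show "\<pi> -` {x} \<inter> space (M N T) \<in> sets (M N T)" .
  qed auto
  have "(\<integral>w. \<beta> powr D (fst (\<pi> w)) hq * real (nplus N T i (t + 1) s w) \<partial>M N T)
      = (\<integral>w. \<beta> powr D (fst (\<pi> w)) hq * (real (snd (\<pi> w)) * g s (fst (\<pi> w))) \<partial>M N T)"
  proof (rule integral_mult_cond_exp[OF \<pi>])
    show "(\<lambda>w. real (nplus N T i (t + 1) s w)) \<in> borel_measurable (M N T)"
      by (intro measurable_compose[OF meas_nplus]) auto
    show "integrable (M N T) (\<lambda>w. \<beta> powr D (fst (\<pi> w)) hq * real (nplus N T i (t + 1) s w))"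
      using observation_integrable[OF k, of "\<lambda>z. \<beta> powr D (fst z) hq * real (snd (snd z))"]
      by (simp add: observation_def \<pi>_def kk)
    show "AE w in M N T. real_cond_exp (M N T) (vimage_algebra (space (M N T)) \<pi> (count_space UNIV))
        (\<lambda>w. real (nplus N T i (t + 1) s w)) w = real (snd (\<pi> w)) * g s (fst (\<pi> w))"
      using model[of i t N T s] k kk unfolding \<pi>_def by simp
  qed
  then show ?thesis
    by (simp add: observation_def \<pi>_def kk)
qed

text \<open>Bias of one residual summand: by the model its mean is
  \<open>E[b^D n (g(s,h) - g(s,hq))]\<close>, which vanishes for \<open>h = hq\<close> and is at most
  \<open>Mc b^kernel_gap\<close> otherwise.\<close>
lemma residual_bias:
  assumes k: "k \<in> idx p N T" and \<beta>: "0 < \<beta>" "\<beta> < 1"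
  shows "\<bar>\<integral>w. residual_term \<beta> (observation N T k w) \<partial>M N T\<bar> \<le> Mc * \<beta> powr kernel_gap"
proof -
  interpret prob_space "M N T" by (rule prob)
  define obs where "obs = observation N T k"
  define tilt where "tilt z = \<beta> powr D (fst z) hq * real (fst (snd z)) * (g s (fst z) - g s hq)"
    for z :: "'s datacube \<times> nat \<times> nat"
  have int: "integrable (M N T) (\<lambda>w. \<psi> (obs w))" for \<psi> :: "'s datacube \<times> nat \<times> nat \<Rightarrow> real"
    unfolding obs_def by (rule observation_integrable[OF k])
  define up where "up z = \<beta> powr D (fst z) hq * real (snd (snd z))"
    for z :: "'s datacube \<times> nat \<times> nat"
  define modelled where "modelled z = \<beta> powr D (fst z) hq * (real (fst (snd z)) * g s (fst z))"
    for z :: "'s datacube \<times> nat \<times> nat"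
  have "residual_term \<beta> = (\<lambda>z. up z - g s hq * kernel_term \<beta> z)"
    "tilt = (\<lambda>z. modelled z - g s hq * kernel_term \<beta> z)"
    by (auto simp: residual_term_def kernel_term_def up_def modelled_def tilt_def split_beta
        algebra_simps)
  then have "(\<integral>w. residual_term \<beta> (obs w) \<partial>M N T)
        = (\<integral>w. up (obs w) \<partial>M N T) - g s hq * (\<integral>w. kernel_term \<beta> (obs w) \<partial>M N T)"
      "(\<integral>w. tilt (obs w) \<partial>M N T)
        = (\<integral>w. modelled (obs w) \<partial>M N T) - g s hq * (\<integral>w. kernel_term \<beta> (obs w) \<partial>M N T)"
    using int[of up] int[of modelled] int[of "kernel_term \<beta>"] by simp_all
  moreover have "(\<integral>w. up (obs w) \<partial>M N T) = (\<integral>w. modelled (obs w) \<partial>M N T)"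
    unfolding up_def modelled_def obs_def by (rule kernel_weighted_model[OF k])
  ultimately have bias_eq: "(\<integral>w. residual_term \<beta> (obs w) \<partial>M N T) = (\<integral>w. tilt (obs w) \<partial>M N T)"
    by simp
  have tilt_bound: "\<bar>tilt z\<bar> \<le> Mc * \<beta> powr kernel_gap" if z: "z \<in> observation_space" for z
  proof (cases "fst z = hq")
    case False
    have h: "fst z \<in> possible_datacubes Mc" and a: "fst (snd z) \<le> Mc"
      using z unfolding observation_space_def by auto
    have "\<beta> powr D (fst z) hq \<le> \<beta> powr kernel_gap"
      using powr_mono'[OF kernel_gap_le[OF h False], of \<beta>] \<beta> by simp
    moreover have "\<bar>g s (fst z) - g s hq\<bar> \<le> 1"
      using g_range[of s "fst z"] g_range[of s hq] by (simp add: abs_le_iff)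
    ultimately have "\<bar>tilt z\<bar> \<le> \<beta> powr kernel_gap * real Mc * 1"
      unfolding tilt_def abs_mult using a by (intro mult_mono) auto
    then show ?thesis by (simp add: mult.commute)
  qed (simp add: tilt_def)
  have "\<bar>\<integral>w. tilt (obs w) \<partial>M N T\<bar> \<le> (\<integral>w. \<bar>tilt (obs w)\<bar> \<partial>M N T)"
    by (rule integral_abs_bound)
  also have "\<dots> \<le> Mc * \<beta> powr kernel_gap"
    using int observation_in_space tilt_bound unfolding obs_def
    by (intro integral_le_const AE_I2) auto
  finally show ?thesis
    using bias_eq unfolding obs_def by simp
qed

text \<open>Summing the per-term bias over the \<open>N (T - p - 1)\<close> index pairs and normalising by
  \<open>N (T - p - 2)\<close> at most doubles it.\<close>
lemma averaged_residual_bias: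
  assumes T: "p + 2 < T" and N: "1 \<le> N"
  shows "\<bar>(1 / (real N * (real T - real p - 2))) *
           (\<Sum>k\<in>idx p N T. (\<integral>w. residual_term (b N T) (observation N T k w) \<partial>M N T))\<bar>
         \<le> 2 * (Mc * b N T powr kernel_gap)"
proof -
  define m where "m = real N * (real T - real p - 2)"
  have m: "0 < m" unfolding m_def using T N by auto
  have "\<bar>\<Sum>k\<in>idx p N T. (\<integral>w. residual_term (b N T) (observation N T k w) \<partial>M N T)\<bar>
      \<le> real (card (idx p N T)) * (Mc * b N T powr kernel_gap)"
    using residual_bias b_range
    by (intro order.trans[OF sum_abs]) (simp add: sum_bounded_above)
  also have "\<dots> \<le> 2 * m * (Mc * b N T powr kernel_gap)"
    unfolding m_def using card_idx_le[OF T] by (intro mult_right_mono) auto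
  finally show ?thesis
    using m unfolding m_def[symmetric] by (simp add: abs_mult field_simps)
qed

abbreviation f_est :: "nat \<Rightarrow> nat \<Rightarrow> 'a \<Rightarrow> real" where
  "f_est N T \<equiv> f_hat D (b N T) p N T (n N T) (nplus N T) s hq"

abbreviation h_est :: "nat \<Rightarrow> nat \<Rightarrow> 'a \<Rightarrow> real" where
  "h_est N T \<equiv> h_hat D (b N T) p N T (n N T) (nplus N T) s hq"

abbreviation g_est :: "nat \<Rightarrow> nat \<Rightarrow> 'a \<Rightarrow> real" where
  "g_est N T \<equiv> g_hat D (b N T) p N T (n N T) (nplus N T) s hq"


lemma estimator_fluctuations:
  fixes N T :: nat and \<beta> :: real
  defines "m \<equiv> real N * (real T - real p - 2)"
  shows "f_hat D \<beta> p N T (n N T) (nplus N T) s hq w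
           - (\<integral>w. f_hat D \<beta> p N T (n N T) (nplus N T) s hq w \<partial>M N T)
         = (1 / m) * (\<Sum>k\<in>idx p N T. kernel_term \<beta> (observation N T k w)
                        - (\<integral>w'. kernel_term \<beta> (observation N T k w') \<partial>M N T))"
    and "(h_hat D \<beta> p N T (n N T) (nplus N T) s hq w - g s hq * f_hat D \<beta> p N T (n N T) (nplus N T) s hq w)
           - (1 / m) * (\<Sum>k\<in>idx p N T. (\<integral>w'. residual_term \<beta> (observation N T k w') \<partial>M N T))
         = (1 / m) * (\<Sum>k\<in>idx p N T. residual_term \<beta> (observation N T k w)
                        - (\<integral>w'. residual_term \<beta> (observation N T k w') \<partial>M N T))"
  unfolding m_def
  subgoal unfolding f_hat_average
    by (simp add: observation_integrable sum_subtractf right_diff_distrib)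
  subgoal unfolding residual_average
    by (simp add: sum_subtractf right_diff_distrib)
  done

text \<open>Finite-sample bound: if the mean of \<open>f_hat\<close> is at least \<open>2c\<close> and the bias is small, then
  \<open>|g_hat - g(s,hq)| > e\<close> only if one of the two centred averages deviates, which has
  probability \<open>O(1 / (N (T - p - 2)))\<close>.\<close>
lemma finite_sample_bound:
  assumes T: "p + 2 < T" and N: "1 \<le> N" and c: "0 < c" and e: "0 < e"
    and mean_f: "2 * c \<le> (\<integral>w. f_est N T w \<partial>M N T)"
    and small_bias: "2 * Mc * b N T powr kernel_gap \<le> e * c / 2"
  shows "measure (M N T) {w\<in>space (M N T). e < \<bar>g_est N T w - g s hq\<bar>}
      \<le> 2 * (real (card observation_space) ^ 2 * real Mc ^ 2 * mixing_bound)
         * (1 / c\<^sup>2 + 1 / (e * c / 2)\<^sup>2) * (1 / (real N * (real T - real p - 2)))"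
proof -
  interpret prob_space "M N T" by (rule prob)
  define m where "m = real N * (real T - real p - 2)"
  define I where "I = idx p N T"
  define \<beta> where "\<beta> = b N T"
  define obs where "obs = observation N T"
  define K where "K = real (card observation_space) ^ 2 * real Mc ^ 2 * mixing_bound"
  have m: "0 < m" unfolding m_def using T N by auto
  have \<beta>: "0 < \<beta>" "\<beta> < 1" using b_range unfolding \<beta>_def by auto
  define Sf where "Sf w = (\<Sum>k\<in>I. kernel_term \<beta> (obs k w) - (\<integral>w'. kernel_term \<beta> (obs k w') \<partial>M N T))" for w
  define Sr where "Sr w = (\<Sum>k\<in>I. residual_term \<beta> (obs k w) - (\<integral>w'. residual_term \<beta> (obs k w') \<partial>M N T))" for w
  define Ef where "Ef = (\<integral>w. f_est N T w \<partial>M N T)"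
  define Er where "Er = (1 / m) * (\<Sum>k\<in>I. (\<integral>w. residual_term \<beta> (obs k w) \<partial>M N T))"
  have f_dev: "f_est N T w - Ef = (1 / m) * Sf w"
    and r_dev: "(h_est N T w - g s hq * f_est N T w) - Er = (1 / m) * Sr w" for w
    unfolding Ef_def Er_def Sf_def Sr_def m_def I_def \<beta>_def obs_def
    by (rule estimator_fluctuations)+
  have "\<bar>Er\<bar> \<le> 2 * (Mc * \<beta> powr kernel_gap)"
    unfolding Er_def m_def I_def \<beta>_def obs_def by (rule averaged_residual_bias[OF T N])
  then have Er_small: "\<bar>Er\<bar> \<le> e * c / 2"
    using small_bias unfolding \<beta>_def by simp
  define A where "A = {w\<in>space (M N T). m * c \<le> \<bar>Sf w\<bar>}"
  define B where "B = {w\<in>space (M N T). m * (e * c / 2) \<le> \<bar>Sr w\<bar>}"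
  have "{w\<in>space (M N T). e < \<bar>g_est N T w - g s hq\<bar>} \<subseteq> A \<union> B"
  proof (rule subsetI, rule ccontr)
    fix w assume w: "w \<in> {w\<in>space (M N T). e < \<bar>g_est N T w - g s hq\<bar>}" and "w \<notin> A \<union> B"
    then have "\<bar>Sf w\<bar> < m * c" "\<bar>Sr w\<bar> < m * (e * c / 2)" unfolding A_def B_def by auto
    then have "\<bar>f_est N T w - Ef\<bar> < c" "\<bar>(h_est N T w - g s hq * f_est N T w) - Er\<bar> < e * c / 2"
      unfolding f_dev r_dev using m by (simp_all add: abs_mult field_simps)
    from ratio_deviation[OF this(1) mean_f[folded Ef_def] this(2) Er_small]
    show False using w by (simp add: g_hat_def)
  qed
  moreover have "Sf \<in> borel_measurable (M N T)" "Sr \<in> borel_measurable (M N T)"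
    unfolding Sf_def Sr_def I_def obs_def
    by (auto intro!: borel_measurable_sum borel_measurable_diff observation_measurable)
  then have "A \<in> sets (M N T)" "B \<in> sets (M N T)"
    unfolding A_def B_def by measurable
  ultimately have "measure (M N T) {w\<in>space (M N T). e < \<bar>g_est N T w - g s hq\<bar>}
      \<le> measure (M N T) A + measure (M N T) B"
    by (meson finite_measure_mono measure_Un_le order_trans sets.Un)
  also have "\<dots> \<le> 2 * K / c\<^sup>2 * (1 / m) + 2 * K / (e * c / 2)\<^sup>2 * (1 / m)"
    unfolding A_def B_def Sf_def Sr_def I_def obs_def m_def K_def
    using c e kernel_term_bound[OF \<beta>] residual_term_bound[OF \<beta>]
    by (intro add_mono observation_average_deviation[OF T N]) auto
  also have "\<dots> = 2 * K * (1 / c\<^sup>2 + 1 / (e * c / 2)\<^sup>2) * (1 / m)"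
    using m c e by (simp add: field_simps)
  finally show ?thesis unfolding m_def K_def .
qed

text \<open>Consistency: the bias vanishes as \<open>b \<rightarrow> 0\<close> and the deviation probability as \<open>N T \<rightarrow> \<infinity>\<close>.\<close>
lemma consistency:
  assumes bandwidth: "((\<lambda>(N, T). b N T) \<longlongrightarrow> 0) (NT_limit p)"
    and mean_f_pos: "Liminf (NT_limit p) (\<lambda>(N, T). ereal (\<integral>w. f_est N T w \<partial>M N T)) > 0"
  shows "conv_in_prob (NT_limit p) (\<lambda>(N, T). M N T) (\<lambda>(N, T). g_est N T) (g s hq)"
  unfolding conv_in_prob_def
proof (intro allI impI)
  fix e :: real assume e: "0 < e"
  obtain c where c: "0 < c" and mean_f:
    "eventually (\<lambda>x. 2 * c \<le> (\<integral>w. f_est (fst x) (snd x) w \<partial>M (fst x) (snd x))) (NT_limit p)"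
    by (rule Liminf_pos_eventually_lower_bound[OF mean_f_pos[unfolded case_prod_beta']])
  have "((\<lambda>x. b (fst x) (snd x) powr kernel_gap) \<longlongrightarrow> 0) (NT_limit p)"
    by (rule tendsto_zero_powrI[OF bandwidth[unfolded case_prod_beta'] tendsto_const])
      (use b_range kernel_gap_pos in \<open>auto intro: always_eventually less_imp_le\<close>)
  then have "((\<lambda>x. 2 * real Mc * b (fst x) (snd x) powr kernel_gap) \<longlongrightarrow> 0) (NT_limit p)"
    using tendsto_mult_left by fastforce
  from order_tendstoD(2)[OF this, of "e * c / 2"]
  have small_bias: "eventually (\<lambda>(N, T). 2 * Mc * b N T powr kernel_gap \<le> e * c / 2) (NT_limit p)"
    using c e by (auto simp: case_prod_beta' elim: eventually_mono)
  define K where "K = 2 * (real (card observation_space) ^ 2 * real Mc ^ 2 * mixing_bound)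
      * (1 / c\<^sup>2 + 1 / (e * c / 2)\<^sup>2)"
  have upper: "eventually (\<lambda>(N, T). measure (M N T) {w\<in>space (M N T). e < \<bar>g_est N T w - g s hq\<bar>}
      \<le> K * (1 / (real N * (real T - real p - 2)))) (NT_limit p)"
    using eventually_NT_limit[of 1 p] mean_f small_bias
  proof eventually_elim
    case (elim x)
    obtain N T where x: "x = (N, T)" by (cases x)
    with elim have "p + 2 < T" "1 \<le> N" by auto
    from finite_sample_bound[OF this c e] elim show ?case
      unfolding x K_def by simp
  qed
  have "((\<lambda>(N, T). K * (1 / (real N * (real T - real p - 2)))) \<longlongrightarrow> K * 0) (NT_limit p)"
    using tendsto_mult_left[OF NT_limit_inverse_sample_size] by (simp add: case_prod_beta')
  then show "((\<lambda>x. measure (case x of (N, T) \<Rightarrow> M N T) {w \<in> space (case x of (N, T) \<Rightarrow> M N T).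
      e < \<bar>(case x of (N, T) \<Rightarrow> g_est N T) w - g s hq\<bar>}) \<longlongrightarrow> 0) (NT_limit p)"
    using upper unfolding case_prod_beta'
    by (intro tendsto_sandwich[OF always_eventually[OF allI[OF measure_nonneg]]]) auto
qed

end

theorem theorem1:
  fixes M :: "nat \<Rightarrow> nat \<Rightarrow> 'a measure"
    and n nplus :: "nat \<Rightarrow> nat \<Rightarrow> nat \<Rightarrow> nat \<Rightarrow> 's::finite \<Rightarrow> 'a \<Rightarrow> nat"
    and g :: "'s \<Rightarrow> 's datacube \<Rightarrow> real"
    and D :: "'s datacube \<Rightarrow> 's datacube \<Rightarrow> real"
    and b :: "nat \<Rightarrow> nat \<Rightarrow> real"
    and p Mc :: nat
    and F :: "nat \<Rightarrow> nat \<Rightarrow> nat \<Rightarrow> nat \<Rightarrow> 'a measure"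
    and dist :: "nat \<Rightarrow> nat \<Rightarrow> nat \<times> nat \<Rightarrow> nat \<times> nat \<Rightarrow> nat"
    and \<alpha> :: "nat \<Rightarrow> real"
    and \<rho> C :: real
    and s :: 's
    and hq :: "'s datacube"
  assumes p_pos: "p \<ge> 1"
    and prob: "\<And>N T. prob_space (M N T)"
    and meas_n: "\<And>N T i t s'. n N T i t s' \<in> measurable (M N T) (count_space UNIV)"
    and meas_nplus: "\<And>N T i t s'. nplus N T i t s' \<in> measurable (M N T) (count_space UNIV)"
    \<comment> \<open>n+ counts a subset of the pairs counted by n\<close>
    and nplus_le: "\<And>N T i t s' w. w \<in> space (M N T) \<Longrightarrow> nplus N T i t s' w \<le> n N T i t s' w"
    \<comment> \<open>(A1) bounded neighbourhood sizes\<close>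
    and A1: "\<And>N T i t s' w. w \<in> space (M N T) \<Longrightarrow> n N T i t s' w \<le> Mc"
    \<comment> \<open>(M)\<close>
    and g_range: "\<And>s' h. 0 \<le> g s' h \<and> g s' h \<le> 1"
    and model: "\<And>N T i t s'. (i, t) \<in> idx p N T \<Longrightarrow>
        AE w in M N T.
          real_cond_exp (M N T)
            (vimage_algebra (space (M N T))
               (\<lambda>w. (datacube (n N T) (nplus N T) i t w, n N T i (t + 1) s' w)) (count_space UNIV))
            (\<lambda>w. real (nplus N T i (t + 1) s' w)) w
          = real (n N T i (t + 1) s' w) * g s' (datacube (n N T) (nplus N T) i t w)"
    \<comment> \<open>distance D underlying the kernel\<close>
    and D_nonneg: "\<And>h h'. D h h' \<ge> 0"
    and D_zero: "\<And>h h'. D h h' = 0 \<longleftrightarrow> h = h'"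
    \<comment> \<open>(A2) bandwidth\<close>
    and b_range: "\<And>N T. 0 < b N T \<and> b N T < 1"
    and A2: "((\<lambda>(N, T). b N T) \<longlongrightarrow> 0) (NT_limit p)"
    \<comment> \<open>(A3) strong mixing w.r.t. sigma-algebras F(i,t) containing the datacube variables\<close>
    and F_sub: "\<And>N T i t. (i, t) \<in> idx p N T \<Longrightarrow> subalgebra (M N T) (F N T i t)"
    and F_h: "\<And>N T i t. (i, t) \<in> idx p N T \<Longrightarrow>
        datacube (n N T) (nplus N T) i t \<in> measurable (F N T i t) (count_space UNIV)"
    and F_n: "\<And>N T i t s'. (i, t) \<in> idx p N T \<Longrightarrow>
        n N T i (t + 1) s' \<in> measurable (F N T i t) (count_space UNIV)"
    and F_nplus: "\<And>N T i t s'. (i, t) \<in> idx p N T \<Longrightarrow>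
        nplus N T i (t + 1) s' \<in> measurable (F N T i t) (count_space UNIV)"
    and alpha_nonneg: "\<And>k. \<alpha> k \<ge> 0"
    and A3_mixing: "\<And>N T i t i' t' k A B. (i, t) \<in> idx p N T \<Longrightarrow> (i', t') \<in> idx p N T \<Longrightarrow>
        k \<ge> 1 \<Longrightarrow> dist N T (i, t) (i', t') \<ge> k \<Longrightarrow>
        A \<in> sets (F N T i t) \<Longrightarrow> B \<in> sets (F N T i' t') \<Longrightarrow>
        \<bar>measure (M N T) (A \<inter> B) - measure (M N T) A * measure (M N T) B\<bar> \<le> \<alpha> k"
    and A3_sum: "summable (\<lambda>k. \<alpha> (Suc k) * real (Suc k) powr (\<rho> - 1))"
    \<comment> \<open>(A4) growth\<close>
    and A4_zero: "\<And>N T i t. (i, t) \<in> idx p N T \<Longrightarrow>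
        real (card {(i', t') \<in> idx p N T. dist N T (i, t) (i', t') = 0}) \<le> C"
    and A4_d: "\<And>N T i t d. (i, t) \<in> idx p N T \<Longrightarrow> d \<ge> 1 \<Longrightarrow>
        real (card {(i', t') \<in> idx p N T. dist N T (i, t) (i', t') = d}) \<le> C * real d powr (\<rho> - 1)"
    \<comment> \<open>query datacube is a possible datacube\<close>
    and hq_in: "\<forall>s'. snd (hq s') \<le> fst (hq s') \<and> fst (hq s') \<le> Mc"
    \<comment> \<open>liminf of E[f_hat] positive\<close>
    and liminf_pos: "Liminf (NT_limit p)
        (\<lambda>(N, T). ereal (integral\<^sup>L (M N T) (f_hat D (b N T) p N T (n N T) (nplus N T) s hq))) > 0"
  shows "conv_in_prob (NT_limit p) (\<lambda>(N, T). M N T)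
           (\<lambda>(N, T). g_hat D (b N T) p N T (n N T) (nplus N T) s hq) (g s hq)"
proof -
  interpret datacube_model M n nplus g D b p Mc F dist \<alpha> \<rho> C s hq
    by (rule datacube_model.intro; fact)
  show ?thesis
    by (rule consistency[OF A2 liminf_pos])
qed

end
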